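(* Let $r_{\rm A}>0$. There exists $\theta_0\in\,]0,\pi/2[$ such that for every $\theta_{\rm A}\in\,]\theta_0,\pi/2[$ the function $$T_I^S(\eta)=\int_{-\pi-\theta_{\rm A}}^{\theta_{\rm A}}\frac{r_{\rm A}^{3/2}(1-\eta\sin\theta_{\rm A})^{3/2}}{(1-\eta\sin\theta)^2}\,{\rm d}\theta,\qquad \eta\in\,]-1,1/\sin\theta_{\rm A}[,$$ is not convex.
   Context: Kepler problem normalized as $\ddot q=-q/|q|^3$, center ${\rm O}$ at the origin, polar coordinates $(r,\theta)$. With ${\rm A}=(r_{\rm A}\cos\theta_{\rm A},r_{\rm A}\sin\theta_{\rm A})$ and ${\rm B}=(-r_{\rm A}\cos\theta_{\rm A},r_{\rm A}\sin\theta_{\rm A})$, the simple indirect Keplerian arcs from ${\rm A}$ to ${\rm B}$ are the arcs of the conics $r=r_{\rm A}(1-\eta\sin\theta_{\rm A})/(1-\eta\sin\theta)$ ($\eta$ the signed eccentricity) passing below ${\rm O}$, with $\theta$ going from $\theta_{\rm A}$ down to $-\pi-\theta_{\rm A}$; these exist exactly for $\eta\in\,]-1,1/\sin\theta_{\rm A}[$, and $T_I^S(\eta)$ is their elapsed time (using $C=r^2|\dot\theta|$, $C^2=r_{\rm A}(1-\eta\sin\theta_{\rm A})$). *)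

theory Defs
  imports "HOL-Analysis.Analysis"
begin

definition TIS :: "real \<Rightarrow> real \<Rightarrow> real \<Rightarrow> real" where
  "TIS rA thetaA eta =
     integral {-pi - thetaA..thetaA}
       (\<lambda>\<theta>. rA powr (3/2) * (1 - eta * sin thetaA) powr (3/2) / (1 - eta * sin \<theta>)\<^sup>2)"

end

theory Submission
  imports Defs
begin

text \<open>
  Write \<open>e = 1 - \<eta> sin t\<close> for the value of the denominator at the apex \<open>\<theta> = t\<close> of the arc.
  For \<open>t > pi/4\<close> the denominator exceeds \<open>e\<close> by at least \<open>cos t / (2 pi)\<close> times the distance
  of \<open>\<theta>\<close> to the endpoints (Jordan's inequality), and it is at most \<open>5 e / 2\<close> on a window of
  width \<open>e sin t / cos t\<close> at the apex.  Hence \<open>TIS\<close> is of order \<open>sqrt e / cos t\<close>: it tends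
  to \<open>0\<close> as \<open>\<eta> \<rightarrow> 1 / sin t\<close>, while \<open>TIS 0 = rA^(3/2) (pi + 2 t)\<close>.  Comparing \<open>\<eta> = 0\<close>
  with the points where \<open>sqrt e = cos t / 10^3\<close> and \<open>sqrt e = cos t / 10^6\<close>, the middle
  value lies far above the chord.
\<close>

lemma one_minus_cos_le_half_square: "1 - cos (u::real) \<le> u\<^sup>2 / 2"
proof -
  have "cos u = 1 - 2 * (sin (u/2))\<^sup>2"
    using cos_double_sin[of "u/2"] by simp
  moreover have "(sin (u/2))\<^sup>2 \<le> (u/2)\<^sup>2"
    using abs_sin_x_le_abs_x[of "u/2"] by (metis abs_le_square_iff)
  ultimately show ?thesis by (simp add: power_divide)
qed

lemma sin_ge_cubic:
  assumes "(0::real) \<le> u"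
  shows "u - u^3 / 6 \<le> sin u"
proof -
  let ?h = "\<lambda>x::real. sin x - x + x^3 / 6"
  have "(?h has_real_derivative (cos x - 1 + x\<^sup>2 / 2)) (at x)" for x
    by (auto intro!: derivative_eq_intros simp: power2_eq_square)
  moreover have "0 \<le> cos x - 1 + x\<^sup>2 / 2" for x :: real
    using one_minus_cos_le_half_square[of x] by linarith
  ultimately have "?h 0 \<le> ?h u"
    by (intro DERIV_nonneg_imp_nondecreasing[OF assms]) blast
  then show ?thesis by simp
qed

lemma sin_ge_divide_pi:
  assumes "(0::real) \<le> u" "u \<le> pi/2"
  shows "u / pi \<le> sin u"
proof -
  have "u < 2"
    using assms pi_less_4 by linarith
  then have "u\<^sup>2 \<le> 4"
    using assms power_mono[of u 2 2] by simp
  then have "u^3 \<le> 4 * u"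
    using assms by (simp add: power3_eq_cube power2_eq_square mult_right_mono)
  then have "u / 3 \<le> sin u"
    using sin_ge_cubic[OF assms(1)] by linarith
  moreover have "u / pi \<le> u / 3"
    using assms pi_gt3 by (intro divide_left_mono) auto
  ultimately show ?thesis by linarith
qed

lemma sin_minus_sin_diff:
  "sin t - sin (t - u) = sin t * (1 - cos u) + cos t * sin (u::real)"
  by (simp add: sin_diff algebra_simps)

lemma sin_minus_sin_diff_ge:
  assumes "0 < cos t" "cos t \<le> sin t" "0 \<le> u" "u < pi"
  shows "cos t * u / pi \<le> sin t - sin (t - u)"
proof (cases "u \<le> pi/2")
  case True
  have "cos t * (u / pi) \<le> cos t * sin u"
    using sin_ge_divide_pi[OF assms(3) True] assms by (intro mult_left_mono) auto
  moreover have "0 \<le> sin t * (1 - cos u)"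
    using assms by simp
  ultimately show ?thesis
    unfolding sin_minus_sin_diff by simp
next
  case False
  have "0 \<le> cos (pi - u)"
    using False assms by (intro cos_ge_zero) auto
  then have "sin t \<le> sin t * (1 - cos u)"
    using assms by (simp add: algebra_simps mult_nonpos_nonneg)
  moreover have "0 \<le> cos t * sin u"
    using assms by (simp add: sin_ge_zero)
  moreover have "cos t * u / pi \<le> cos t"
    using assms by (simp add: divide_le_eq)
  ultimately show ?thesis
    unfolding sin_minus_sin_diff using assms by linarith
qed

lemma sin_minus_sin_diff_le:
  assumes "0 \<le> sin t" "0 \<le> cos t" "0 \<le> (u::real)"
  shows "sin t - sin (t - u) \<le> sin t * u\<^sup>2 / 2 + cos t * u"
proof -
  have "sin t * (1 - cos u) \<le> sin t * (u\<^sup>2 / 2)"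
    using one_minus_cos_le_half_square[of u] assms by (intro mult_left_mono) auto
  moreover have "cos t * sin u \<le> cos t * u"
    using sin_x_le_x[of u] assms by (intro mult_left_mono) auto
  ultimately show ?thesis
    unfolding sin_minus_sin_diff by simp
qed

lemma sin_cos_between_quarter_pi_half_pi:
  assumes "pi/4 < t" "t < pi/2"
  shows "0 < cos t" "cos t < sin t" "1/2 < sin t"
proof -
  have "0 < t"
    using assms pi_gt_zero by linarith
  then show c0: "0 < cos t"
    using assms by (intro cos_gt_zero_pi) auto
  have "cos t < cos (pi/2 - t)"
    using assms by (intro cos_monotone_0_pi) auto
  then show cs: "cos t < sin t"
    by (simp add: cos_sin_eq)
  have "(cos t)\<^sup>2 < (sin t)\<^sup>2"
    using c0 cs by (intro power_strict_mono) auto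
  then have "1/2 < (sin t)\<^sup>2"
    using sin_cos_squared_add[of t] by linarith
  then have "(1/2)\<^sup>2 < (sin t)\<^sup>2"
    by (simp add: power_divide)
  then show "1/2 < sin t"
    by (rule power_less_imp_less_base) (use c0 cs in linarith)
qed

lemma sin_minus_sin_ge_endpoint_distance:
  assumes t: "pi/4 < t" "t < pi/2" and \<theta>: "\<theta> \<in> {-pi-t..t}"
  shows "cos t * min (t - \<theta>) (\<theta> + pi + t) / pi \<le> sin t - sin \<theta>"
proof -
  note cs = sin_cos_between_quarter_pi_half_pi[OF t]
  have scale: "cos t * min (t - \<theta>) (\<theta> + pi + t) / pi \<le> cos t * u / pi"
    if "min (t - \<theta>) (\<theta> + pi + t) \<le> u" for u
  proof -
    have "cos t * min (t - \<theta>) (\<theta> + pi + t) \<le> cos t * u"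
      using that cs by (simp add: mult_left_mono)
    then show ?thesis
      by (simp add: divide_right_mono)
  qed
  have \<theta>_bounds: "-pi-t \<le> \<theta>" "\<theta> \<le> t"
    using \<theta> by auto
  show ?thesis
  proof (cases "-pi/2 \<le> \<theta>")
    case True
    have "cos t * (t - \<theta>) / pi \<le> sin t - sin (t - (t - \<theta>))"
      using cs \<theta>_bounds True t by (intro sin_minus_sin_diff_ge) auto
    then show ?thesis
      using scale[of "t - \<theta>"] by simp
  next
    case False
    have "cos t * (\<theta> + pi + t) / pi \<le> sin t - sin (t - (\<theta> + pi + t))"
      using cs \<theta>_bounds False t by (intro sin_minus_sin_diff_ge) auto
    moreover have "sin (t - (\<theta> + pi + t)) = sin \<theta>"
      by (simp add: sin_diff sin_add)
    ultimately show ?thesis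
      using scale[of "\<theta> + pi + t"] by simp
  qed
qed

lemma sin_le_sin_endpoint:
  assumes "pi/4 < t" "t < pi/2" "\<theta> \<in> {-pi-t..t}"
  shows "sin \<theta> \<le> sin t"
proof -
  have "0 \<le> cos t * min (t - \<theta>) (\<theta> + pi + t) / pi"
    using assms sin_cos_between_quarter_pi_half_pi[OF assms(1,2)] by auto
  then show ?thesis
    using sin_minus_sin_ge_endpoint_distance[OF assms] by linarith
qed

lemma denominator_ge_apex:
  assumes "pi/4 < t" "t < pi/2" "\<theta> \<in> {-pi-t..t}" "0 \<le> \<eta>"
  shows "1 - \<eta> * sin t \<le> 1 - \<eta> * sin \<theta>"
  using sin_le_sin_endpoint[OF assms(1-3)] assms(4) by (simp add: mult_left_mono)

lemma denominator_ge_tent: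
  assumes t: "pi/4 < t" "t < pi/2" and \<theta>: "\<theta> \<in> {-pi-t..t}" and \<eta>: "1/2 \<le> \<eta>"
  shows "(1 - \<eta> * sin t) + cos t / (2*pi) * min (t - \<theta>) (\<theta> + pi + t) \<le> 1 - \<eta> * sin \<theta>"
proof -
  have "cos t / (2*pi) * min (t - \<theta>) (\<theta> + pi + t)
      = 1/2 * (cos t * min (t - \<theta>) (\<theta> + pi + t) / pi)"
    by simp
  also have "\<dots> \<le> \<eta> * (sin t - sin \<theta>)"
    using sin_minus_sin_ge_endpoint_distance[OF t \<theta>] sin_le_sin_endpoint[OF t \<theta>] \<eta> \<theta>
      sin_cos_between_quarter_pi_half_pi[OF t]
    by (intro mult_mono) auto
  finally show ?thesis
    by (simp add: algebra_simps)
qed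

lemma denominator_le_near_apex:
  fixes t \<eta> \<theta> :: real
  assumes s: "0 < sin t" and c: "0 < cos t"
    and \<eta>: "0 \<le> \<eta>" and e: "0 \<le> 1 - \<eta> * sin t" "1 - \<eta> * sin t \<le> (cos t)\<^sup>2"
    and u: "0 \<le> t - \<theta>" "t - \<theta> \<le> (1 - \<eta> * sin t) * sin t / cos t"
  shows "1 - \<eta> * sin \<theta> \<le> 5/2 * (1 - \<eta> * sin t)"
proof -
  define e where "e = 1 - \<eta> * sin t"
  define u where "u = t - \<theta>"
  define \<delta> where "\<delta> = e * sin t / cos t"
  have \<eta>s: "\<eta> * sin t \<le> 1"
    using e by (simp add: e_def)
  have "\<eta> * (sin t - sin \<theta>) \<le> \<eta> * (sin t * u\<^sup>2 / 2 + cos t * u)"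
    using sin_minus_sin_diff_le[of t u] s c u \<eta> by (intro mult_left_mono) (auto simp: u_def)
  also have "\<dots> = \<eta> * sin t * (u\<^sup>2 / 2 + cos t / sin t * u)"
    using s by (simp add: field_simps)
  also have "\<dots> \<le> 1 * (\<delta>\<^sup>2 / 2 + cos t / sin t * \<delta>)"
    using \<eta>s \<eta> s c u
    by (intro mult_mono add_mono mult_left_mono divide_right_mono power_mono)
       (auto simp: u_def \<delta>_def e_def)
  also have "cos t / sin t * \<delta> = e"
    using s c by (simp add: \<delta>_def)
  also have "\<delta>\<^sup>2 = e * (e * (sin t)\<^sup>2 / (cos t)\<^sup>2)"
    by (simp add: \<delta>_def power2_eq_square)
  also have "\<dots> \<le> e * 1"
  proof (intro mult_left_mono)
    have "e * (sin t)\<^sup>2 \<le> (cos t)\<^sup>2 * 1"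
      using e by (intro mult_mono) (auto simp: e_def abs_square_le_1)
    then show "e * (sin t)\<^sup>2 / (cos t)\<^sup>2 \<le> 1"
      using c by (simp add: divide_le_eq)
  qed (use e in \<open>simp add: e_def\<close>)
  finally have "\<eta> * sin t - \<eta> * sin \<theta> \<le> 3/2 * e"
    by (simp add: right_diff_distrib)
  then show ?thesis
    by (simp add: e_def right_diff_distrib)
qed

lemma has_integral_inverse_square_tent:
  fixes a e p q :: real
  assumes "0 < a" "0 < e" "p \<le> q"
  shows "((\<lambda>\<theta>. 1 / (e + a * (q - \<theta>))\<^sup>2 + 1 / (e + a * (\<theta> - p))\<^sup>2) has_integral
           2 / a * (1/e - 1 / (e + a * (q - p)))) {p..q}"
proof -
  define F where "F \<theta> = (1 / (e + a * (q - \<theta>)) - 1 / (e + a * (\<theta> - p))) / a" for \<theta>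
  have "(F has_vector_derivative 1 / (e + a * (q - \<theta>))\<^sup>2 + 1 / (e + a * (\<theta> - p))\<^sup>2)
          (at \<theta> within {p..q})" if "\<theta> \<in> {p..q}" for \<theta>
  proof -
    have "0 < e + a * (q - \<theta>)" "0 < e + a * (\<theta> - p)"
      using that assms by (auto intro: add_pos_nonneg)
    then have "(F has_real_derivative 1 / (e + a * (q - \<theta>))\<^sup>2 + 1 / (e + a * (\<theta> - p))\<^sup>2) (at \<theta>)"
      unfolding F_def[abs_def] using assms
      by (auto intro!: derivative_eq_intros simp: power2_eq_square field_simps)
    then show ?thesis
      by (simp add: has_real_derivative_iff_has_vector_derivative has_vector_derivative_at_within)
  qed
  then have "((\<lambda>\<theta>. 1 / (e + a * (q - \<theta>))\<^sup>2 + 1 / (e + a * (\<theta> - p))\<^sup>2) has_integral F q - F p) {p..q}"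
    using assms by (intro fundamental_theorem_of_calculus) auto
  moreover have "F q - F p = 2 / a * (1/e - 1 / (e + a * (q - p)))"
    using assms by (simp add: F_def add_pos_nonneg field_simps)
  ultimately show ?thesis
    by simp
qed

lemma integrable_inverse_square_denominator:
  assumes "pi/4 < t" "t < pi/2" "0 \<le> \<eta>" "0 < 1 - \<eta> * sin t"
  shows "(\<lambda>\<theta>. 1 / (1 - \<eta> * sin \<theta>)\<^sup>2) integrable_on {-pi-t..t}"
proof -
  have "1 - \<eta> * sin \<theta> \<noteq> 0" if "\<theta> \<in> {-pi-t..t}" for \<theta>
    using denominator_ge_apex[OF assms(1,2) that assms(3)] assms(4) by linarith
  then show ?thesis
    by (intro integrable_continuous_interval continuous_intros) auto
qed

lemma integral_inverse_square_denominator_le: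
  assumes t: "pi/4 < t" "t < pi/2" and \<eta>: "1/2 \<le> \<eta>" and e: "0 < 1 - \<eta> * sin t"
  shows "integral {-pi-t..t} (\<lambda>\<theta>. 1 / (1 - \<eta> * sin \<theta>)\<^sup>2) \<le> 4 * pi / (cos t * (1 - \<eta> * sin t))"
proof -
  define e where "e = 1 - \<eta> * sin t"
  define a where "a = cos t / (2*pi)"
  have a: "0 < a"
    using sin_cos_between_quarter_pi_half_pi[OF t] by (simp add: a_def)
  have e0: "0 < e"
    using e by (simp add: e_def)
  have "-pi - t \<le> t"
    using t pi_gt_zero by linarith
  note tent = has_integral_inverse_square_tent[OF a e0 this]
  have "1 / (1 - \<eta> * sin \<theta>)\<^sup>2 \<le> 1 / (e + a * (t - \<theta>))\<^sup>2 + 1 / (e + a * (\<theta> - (-pi-t)))\<^sup>2"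
    if \<theta>: "\<theta> \<in> {-pi-t..t}" for \<theta>
  proof -
    define m where "m = min (t - \<theta>) (\<theta> + pi + t)"
    have "0 < e + a * m"
      using \<theta> a e by (auto simp: m_def e_def intro: add_pos_nonneg)
    moreover have "e + a * m \<le> 1 - \<eta> * sin \<theta>"
      using denominator_ge_tent[OF t \<theta> \<eta>] by (simp add: e_def a_def m_def)
    ultimately have "1 / (1 - \<eta> * sin \<theta>)\<^sup>2 \<le> 1 / (e + a * m)\<^sup>2"
      by (intro divide_left_mono power_mono mult_pos_pos) auto
    moreover have "m = t - \<theta> \<or> m = \<theta> - (-pi-t)"
      by (auto simp: m_def min_def)
    ultimately show ?thesis
      by (auto intro: add_increasing add_increasing2)
  qed
  moreover have "0 \<le> \<eta>"
    using \<eta> by linarith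
  ultimately have "integral {-pi-t..t} (\<lambda>\<theta>. 1 / (1 - \<eta> * sin \<theta>)\<^sup>2)
      \<le> 2 / a * (1/e - 1 / (e + a * (t - (-pi-t))))"
    using has_integral_le[OF integrable_integral[OF integrable_inverse_square_denominator[OF t _ e]] tent]
    by blast
  also have "\<dots> \<le> 2 / a * (1/e)"
    using a e0 \<open>-pi - t \<le> t\<close> by (intro mult_left_mono) (simp_all add: add_pos_nonneg)
  also have "\<dots> = 4 * pi / (cos t * e)"
    by (simp add: a_def)
  finally show ?thesis
    by (simp add: e_def)
qed

lemma integral_inverse_square_denominator_ge:
  assumes t: "pi/4 < t" "t < pi/2" and e: "0 < 1 - \<eta> * sin t" "1 - \<eta> * sin t \<le> (cos t)\<^sup>2"
  shows "4 * sin t / (25 * cos t * (1 - \<eta> * sin t))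
           \<le> integral {-pi-t..t} (\<lambda>\<theta>. 1 / (1 - \<eta> * sin \<theta>)\<^sup>2)"
proof -
  note cs = sin_cos_between_quarter_pi_half_pi[OF t]
  define e where "e = 1 - \<eta> * sin t"
  define \<delta> where "\<delta> = e * sin t / cos t"
  have e0: "0 < e"
    using e by (simp add: e_def)
  have "0 < (sin t)\<^sup>2"
    using cs by simp
  then have "0 < \<eta> * sin t"
    using e sin_cos_squared_add[of t] by linarith
  then have \<eta>: "0 \<le> \<eta>"
    using cs by (auto simp: zero_less_mult_iff)
  have \<delta>: "0 < \<delta>" "\<delta> \<le> 1"
  proof -
    show "0 < \<delta>"
      using e0 cs by (simp add: \<delta>_def)
    have "\<delta> \<le> (cos t)\<^sup>2 * sin t / cos t"
      unfolding \<delta>_def using e cs by (intro divide_right_mono mult_right_mono) (auto simp: e_def)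
    also have "\<dots> = cos t * sin t"
      using cs by (simp add: power2_eq_square)
    also have "\<dots> \<le> 1 * 1"
      using cs by (intro mult_mono) auto
    finally show "\<delta> \<le> 1"
      by simp
  qed
  have sub: "{t-\<delta>..t} \<subseteq> {-pi-t..t}"
    using \<delta> cs t pi_gt3 by auto
  note int = integrable_inverse_square_denominator[OF t \<eta> e(1)]
  have "4 * sin t / (25 * cos t * e) = \<delta> * (1 / (5/2 * e)\<^sup>2)"
    using e0 cs by (simp add: \<delta>_def power2_eq_square field_simps)
  also have "\<dots> = integral {t-\<delta>..t} (\<lambda>_. 1 / (5/2 * e)\<^sup>2)"
    using \<delta> by simp
  also have "\<dots> \<le> integral {t-\<delta>..t} (\<lambda>\<theta>. 1 / (1 - \<eta> * sin \<theta>)\<^sup>2)"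
  proof (rule integral_le)
    show "(\<lambda>\<theta>. 1 / (1 - \<eta> * sin \<theta>)\<^sup>2) integrable_on {t-\<delta>..t}"
      using integrable_on_subinterval[OF int sub] .
    fix \<theta> assume \<theta>: "\<theta> \<in> {t-\<delta>..t}"
    then have "e \<le> 1 - \<eta> * sin \<theta>"
      using denominator_ge_apex[OF t _ \<eta>, of \<theta>] sub unfolding e_def by blast
    moreover have "1 - \<eta> * sin \<theta> \<le> 5/2 * e"
      unfolding e_def
      by (rule denominator_le_near_apex) (use cs \<eta> e \<theta> in \<open>auto simp: e_def \<delta>_def\<close>)
    ultimately show "1 / (5/2 * e)\<^sup>2 \<le> 1 / (1 - \<eta> * sin \<theta>)\<^sup>2"
      using e0 by (intro divide_left_mono power_mono) auto
  qed (rule integrable_const_ivl)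
  also have "\<dots> \<le> integral {-pi-t..t} (\<lambda>\<theta>. 1 / (1 - \<eta> * sin \<theta>)\<^sup>2)"
    using integrable_on_subinterval[OF int sub] int sub by (intro integral_subset_le) auto
  finally show ?thesis
    by (simp add: e_def)
qed

lemma TIS_eq_integral:
  "TIS rA t \<eta> = rA powr (3/2) * (1 - \<eta> * sin t) powr (3/2)
                  * integral {-pi-t..t} (\<lambda>\<theta>. 1 / (1 - \<eta> * sin \<theta>)\<^sup>2)"
proof -
  have "(\<lambda>\<theta>. rA powr (3/2) * (1 - \<eta> * sin t) powr (3/2) / (1 - \<eta> * sin \<theta>)\<^sup>2)
      = (\<lambda>\<theta>. rA powr (3/2) * (1 - \<eta> * sin t) powr (3/2) * (1 / (1 - \<eta> * sin \<theta>)\<^sup>2))"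
    by simp
  then show ?thesis
    unfolding TIS_def by (simp only: integral_mult_right)
qed

lemma powr_three_halves: "0 < (x::real) \<Longrightarrow> x powr (3/2) = x * sqrt x"
  using powr_add[of x 1 "1/2"] by (simp add: powr_half_sqrt)

lemma TIS_le:
  assumes "pi/4 < t" "t < pi/2" "1/2 \<le> \<eta>" "0 < 1 - \<eta> * sin t"
  shows "TIS rA t \<eta> \<le> 4 * pi * rA powr (3/2) * sqrt (1 - \<eta> * sin t) / cos t"
proof -
  define e where "e = 1 - \<eta> * sin t"
  have e: "0 < e"
    using assms by (simp add: e_def)
  have "TIS rA t \<eta> \<le> rA powr (3/2) * e powr (3/2) * (4 * pi / (cos t * e))"
    unfolding TIS_eq_integral e_def using assms
    by (intro mult_left_mono integral_inverse_square_denominator_le) auto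
  also have "\<dots> = 4 * pi * rA powr (3/2) * sqrt e / cos t"
    using e by (simp add: powr_three_halves[OF e])
  finally show ?thesis
    by (simp only: e_def)
qed

lemma TIS_ge:
  assumes "pi/4 < t" "t < pi/2" "0 < 1 - \<eta> * sin t" "1 - \<eta> * sin t \<le> (cos t)\<^sup>2"
  shows "4 * rA powr (3/2) * sin t * sqrt (1 - \<eta> * sin t) / (25 * cos t) \<le> TIS rA t \<eta>"
proof -
  define e where "e = 1 - \<eta> * sin t"
  have e: "0 < e"
    using assms by (simp add: e_def)
  have "4 * rA powr (3/2) * sin t * sqrt e / (25 * cos t)
      = rA powr (3/2) * e powr (3/2) * (4 * sin t / (25 * cos t * e))"
    using e by (simp add: powr_three_halves[OF e])
  also have "\<dots> \<le> TIS rA t \<eta>"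
    unfolding TIS_eq_integral e_def using assms
    by (intro mult_left_mono integral_inverse_square_denominator_ge) auto
  finally show ?thesis
    by (simp only: e_def)
qed

lemma TIS_zero:
  assumes "-pi/2 \<le> t"
  shows "TIS rA t 0 = rA powr (3/2) * (pi + 2*t)"
  using assms unfolding TIS_def by (simp add: algebra_simps)

lemma TIS_not_convex_on:
  assumes rA: "0 < rA" and t: "pi/4 < t" "t < pi/2"
  shows "\<not> convex_on {-1<..<1 / sin t} (TIS rA t)"
proof
  assume conv: "convex_on {-1<..<1 / sin t} (TIS rA t)"
  note cs = sin_cos_between_quarter_pi_half_pi[OF t]
  define R where "R = rA powr (3/2)"
  define e1 e2 where "e1 = (cos t / 1000)\<^sup>2" and "e2 = (cos t / 1000000)\<^sup>2"
  define \<eta>1 \<eta>2 where "\<eta>1 = (1 - e1) / sin t" and "\<eta>2 = (1 - e2) / sin t"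
  have "(cos t)\<^sup>2 \<le> 1"
    by (simp add: abs_square_le_1)
  then have e: "0 < e2" "e2 < e1" "e1 \<le> (cos t)\<^sup>2" "e1 \<le> 1 / 1000000"
    using cs by (auto simp: e1_def e2_def power_divide)
  have e_sin: "1 - \<eta>1 * sin t = e1" "1 - \<eta>2 * sin t = e2"
    using cs by (simp_all add: \<eta>1_def \<eta>2_def)
  have "4 * R * sin t * sqrt e1 / (25 * cos t) \<le> TIS rA t \<eta>1"
    using TIS_ge[OF t, of \<eta>1 rA] e unfolding e_sin R_def by linarith
  moreover have "sqrt e1 = cos t / 1000" "sqrt e2 = cos t / 1000000"
    using cs by (simp_all add: e1_def e2_def)
  ultimately have lower: "4 * R * sin t / 25000 \<le> TIS rA t \<eta>1"
    using cs by simp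
  have "1/2 * sin t \<le> 1 - e2"
    using e sin_le_one[of t] by linarith
  then have "1/2 \<le> \<eta>2"
    using cs by (simp add: \<eta>2_def le_divide_eq)
  then have "TIS rA t \<eta>2 \<le> 4 * pi * R * sqrt e2 / cos t"
    using TIS_le[OF t, of \<eta>2 rA] e unfolding e_sin R_def by linarith
  then have upper: "TIS rA t \<eta>2 \<le> 4 * pi * R / 1000000"
    using cs \<open>sqrt e2 = cos t / 1000000\<close> by simp
  define l where "l = (1 - e1) / (1 - e2)"
  have l: "0 \<le> l" "l \<le> 1" "1 - l \<le> 2 / 1000000"
    using e by (auto simp: l_def field_simps)
  have "\<eta>2 < 1 / sin t"
    unfolding \<eta>2_def using cs e by (intro divide_strict_right_mono) auto
  then have "(0::real) \<in> {-1<..<1 / sin t}" "\<eta>2 \<in> {-1<..<1 / sin t}"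
    using cs \<open>1/2 \<le> \<eta>2\<close> by auto
  moreover have "(1 - l) *\<^sub>R 0 + l *\<^sub>R \<eta>2 = \<eta>1"
    using e by (simp add: l_def \<eta>1_def \<eta>2_def)
  ultimately have "TIS rA t \<eta>1 \<le> (1 - l) * TIS rA t 0 + l * TIS rA t \<eta>2"
    using convex_onD[OF conv l(1,2)] by fastforce
  also have "\<dots> \<le> (2 / 1000000) * (2 * pi * R) + 4 * pi * R / 1000000"
  proof (intro add_mono)
    have "TIS rA t 0 = R * (pi + 2*t)" "0 \<le> R"
      using TIS_zero[of t rA] t pi_gt_zero by (simp_all add: R_def)
    moreover have "R * (pi + 2*t) \<le> R * (2 * pi)"
      using \<open>0 \<le> R\<close> t by (intro mult_left_mono) auto
    ultimately have "0 \<le> TIS rA t 0" "TIS rA t 0 \<le> 2 * pi * R"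
      using t pi_gt_zero by (simp_all add: mult.commute)
    then show "(1 - l) * TIS rA t 0 \<le> (2 / 1000000) * (2 * pi * R)"
      using l by (intro mult_mono) auto
    have "l * TIS rA t \<eta>2 \<le> l * (4 * pi * R / 1000000)"
      using l upper by (intro mult_left_mono)
    also have "\<dots> \<le> 4 * pi * R / 1000000"
      using l pi_gt_zero by (simp add: R_def mult_left_le_one_le)
    finally show "l * TIS rA t \<eta>2 \<le> 4 * pi * R / 1000000" .
  qed
  finally have "4 * R * sin t / 25000 \<le> 8 * pi * R / 1000000"
    using lower by simp
  moreover have "4 * R * sin t / 25000 = R * sin t / 6250" "8 * pi * R / 1000000 = pi * R / 125000"
    by simp_all
  moreover have "0 < R" "R / 2 < R * sin t" "pi * R < 4 * R"
    using rA cs pi_less_4 by (simp_all add: R_def)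
  ultimately show False
    by linarith
qed

theorem proposition8:
  fixes rA :: real
  assumes "rA > 0"
  shows "\<exists>\<theta>0. 0 < \<theta>0 \<and> \<theta>0 < pi/2 \<and>
           (\<forall>thetaA. \<theta>0 < thetaA \<and> thetaA < pi/2 \<longrightarrow>
              \<not> convex_on {-1<..<1 / sin thetaA} (TIS rA thetaA))"
  using TIS_not_convex_on[OF assms] by (intro exI[of _ "pi/4"]) auto

end
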